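(* Let $L\ge3$, $m\ge1$, $x_1>\cdots>x_N$ real, $\mathbf X=(x_1,\dots,x_N)^T$. Let $A_{L,\mathrm{par}}(\mathbf X)$ be the set of all vectors obtainable as the (sign-normalized) output of a single sign-activated unit with hidden widths $m_1=\cdots=m_{L-2}=m$ and $m_{L-1}=1$. Then $A_{L,\mathrm{par}}(\mathbf X)$ contains every vector of $\mathcal H^{(m)}$.
   Context: $\sigma(x)=\mathrm{sign}(x)$ with $\mathrm{sign}(x)=1$ if $x\ge0$, $-1$ if $x<0$, applied entrywise. A single unit with widths $m_0=1,m_1,\dots,m_{L-1}=1$ maps $\mathbf X$ to $\mathbf X^{(L)}$ via $\mathbf X^{(1)}=\mathbf X$ and $\mathbf X^{(l+1)}=\sigma(\mathbf X^{(l)}\mathbf W^{(l)}+\mathbf 1\mathbf b^{(l)})\in\{-1,1\}^{N\times m_l}$ for $l\in[L-1]$, with arbitrary $\mathbf W^{(l)}\in\mathbb R^{m_{l-1}\times m_l}$, $\mathbf b^{(l)}\in\mathbb R^{1\times m_l}$. $A_{L,\mathrm{par}}(\mathbf X)$ is the set of all vectors $\epsilon\mathbf X^{(L)}\in\{-1,1\}^N$ over all such weights and biases, where $\epsilon\in\{-1,1\}$ is chosen so that the first entry is $1$. A vector $\mathbf h\in\{-1,1\}^N$ switches at $n>1$ if $h_n\neq h_{n-1}$; $\mathcal H^{(K)}$ is the set of vectors in $\{-1,1\}^N$ with first entry $1$ that switch at most $K$ times. *)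

theory Defs
  imports Complex_Main
begin

definition sgn_act :: "real \<Rightarrow> real" where
  "sgn_act t = (if t \<ge> 0 then 1 else -1)"

definition layer :: "nat \<Rightarrow> nat \<Rightarrow> (nat \<Rightarrow> nat \<Rightarrow> real) \<Rightarrow> (nat \<Rightarrow> real) \<Rightarrow> (nat \<Rightarrow> real) \<Rightarrow> (nat \<Rightarrow> real)" where
  "layer p q W b v = (\<lambda>j. if j < q then sgn_act ((\<Sum>i<p. v i * W i j) + b j) else 0)"

text \<open>ws = [m_0, m_1, ..., m_(L-1)]; W k, b k are the weights/bias of layer k+1.
  fwd ws W b k v applies the first k layers.\<close>
fun fwd :: "nat list \<Rightarrow> (nat \<Rightarrow> nat \<Rightarrow> nat \<Rightarrow> real) \<Rightarrow> (nat \<Rightarrow> nat \<Rightarrow> real) \<Rightarrow> nat \<Rightarrow> (nat \<Rightarrow> real) \<Rightarrow> (nat \<Rightarrow> real)" where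
  "fwd ws W b 0 v = v"
| "fwd ws W b (Suc k) v = layer (ws ! k) (ws ! Suc k) (W k) (b k) (fwd ws W b k v)"

definition unit_out :: "nat list \<Rightarrow> (nat \<Rightarrow> nat \<Rightarrow> nat \<Rightarrow> real) \<Rightarrow> (nat \<Rightarrow> nat \<Rightarrow> real) \<Rightarrow> real \<Rightarrow> real" where
  "unit_out ws W b x = fwd ws W b (length ws - 1) (\<lambda>i. if i = 0 then x else 0) 0"

text \<open>A_par: all sign-normalised output vectors (rows processed independently,
  which is exactly the row-wise action of X W + 1 b).\<close>
definition A_par :: "nat list \<Rightarrow> real list \<Rightarrow> real list set" where
  "A_par ws xs = {map (\<lambda>t. hd out * t) out | out.
      \<exists>W b. out = map (unit_out ws W b) xs}"

definition switches :: "real list \<Rightarrow> nat set" where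
  "switches h = {n. 0 < n \<and> n < length h \<and> h ! n \<noteq> h ! (n - 1)}"

definition H_switch :: "nat \<Rightarrow> nat \<Rightarrow> real list set" where
  "H_switch K N = {h. length h = N \<and> set h \<subseteq> {-1, 1} \<and> h ! 0 = 1 \<and> card (switches h) \<le> K}"

end

theory Submission
  imports Defs
begin

text \<open>Let \<open>c i\<close> be the number of switches of \<open>h\<close> at positions \<open>\<le> i\<close>, so that
  \<open>h\<^sub>i = (-1)^c i\<close> and \<open>c i \<le> m\<close>. As the inputs decrease strictly and \<open>c\<close> is monotone,
  each index set \<open>{i. c i \<le> j}\<close> is an initial segment, cut out by a threshold \<open>t j\<close>.
  The first hidden layer with neurons \<open>sign (x - t j)\<close>, \<open>j < m\<close>, therefore maps \<open>x\<^sub>i\<close> to a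
  vector whose entries \<open>-1\<close> form the initial block of length \<open>c i\<close>; the other hidden layers
  are identities, and an output neuron with alternating weights \<open>(-1)^j\<close> reads off the
  parity of the block length.\<close>

lemma sgn_act_pm1: "v \<in> {-1, 1} \<Longrightarrow> sgn_act v = v"
  unfolding sgn_act_def by auto

lemma sgn_act_range: "sgn_act v \<in> {-1, 1}"
  unfolding sgn_act_def by auto

lemma neg_one_power_in_pm1: "(-1::real) ^ n \<in> {-1, 1}"
  by (cases "even n") auto

lemma one_minus_two_alternating_sum: "1 - 2 * (\<Sum>j<c. (-1::real) ^ j) = (-1) ^ c"
  by (induction c) auto

lemma A_parI:
  assumes "map (unit_out ws W b) xs = h" and "hd h = 1"
  shows "h \<in> A_par ws xs"
proof -
  have "h = map (\<lambda>s. hd h * s) h"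
    using assms(2) by simp
  then show ?thesis
    using assms(1) unfolding A_par_def by blast
qed

lemma layer_identity:
  "layer q q (\<lambda>i j. if i = j then 1 else 0) (\<lambda>_. 0) (layer p q W b v) = layer p q W b v"
proof
  fix j
  let ?u = "layer p q W b v"
  show "layer q q (\<lambda>i j. if i = j then 1 else 0) (\<lambda>_. 0) ?u j = ?u j"
  proof (cases "j < q")
    case True
    have "(\<Sum>i<q. ?u i * (if i = j then 1 else 0)) = ?u j"
      using True by (simp add: if_distrib cong: if_cong)
    moreover have "?u j \<in> {-1, 1}"
      using True sgn_act_range by (simp add: layer_def)
    ultimately show ?thesis
      using True by (simp add: layer_def sgn_act_pm1)
  qed (simp add: layer_def)
qed

lemma fwd_identity_layers:
  assumes "\<And>k. 1 \<le> k \<Longrightarrow> k \<le> n \<Longrightarrow> ws ! k = q"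
    and "\<And>k. 1 \<le> k \<Longrightarrow> k < n \<Longrightarrow> W k = (\<lambda>i j. if i = j then 1 else 0) \<and> b k = (\<lambda>_. 0)"
    and "1 \<le> n"
  shows "fwd ws W b n v = fwd ws W b 1 v"
  using assms
proof (induction n)
  case (Suc n)
  show ?case
  proof (cases "n = 0")
    case False
    then have "fwd ws W b (Suc n) v
        = layer q q (\<lambda>i j. if i = j then 1 else 0) (\<lambda>_. 0) (fwd ws W b 1 v)"
      using Suc by simp
    also have "\<dots> = fwd ws W b 1 v"
      using Suc.prems(1)[of 1] False by (simp add: layer_identity)
    finally show ?thesis .
  qed simp
qed simp

text \<open>\<open>W k\<close>, \<open>b k\<close> describe layer \<open>k + 1\<close>; the output bias makes the all-ones
  vector yield the value \<open>1\<close>.\<close>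

definition parity_net_W :: "nat \<Rightarrow> nat \<Rightarrow> nat \<Rightarrow> nat \<Rightarrow> real" where
  "parity_net_W L k i j =
     (if k = 0 then 1 else if k < L - 2 then (if i = j then 1 else 0) else (-1) ^ i)"

definition parity_net_b :: "nat \<Rightarrow> nat \<Rightarrow> (nat \<Rightarrow> real) \<Rightarrow> nat \<Rightarrow> nat \<Rightarrow> real" where
  "parity_net_b L m t k j =
     (if k = 0 then - t j else if k < L - 2 then 0 else 1 - (\<Sum>i<m. (-1) ^ i))"

lemma nth_hidden_widths:
  fixes m :: nat
  assumes "L \<ge> 3"
  shows "length ([1] @ replicate (L - 2) m @ [1]) = L"
    and "([1] @ replicate (L - 2) m @ [1]) ! 0 = 1"
    and "1 \<le> k \<Longrightarrow> k \<le> L - 2 \<Longrightarrow> ([1] @ replicate (L - 2) m @ [1]) ! k = m"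
    and "([1] @ replicate (L - 2) m @ [1]) ! (L - 1) = 1"
  using assms by (auto simp: nth_append nth_Cons')

lemma fwd_parity_net_hidden:
  assumes "L \<ge> 3"
  shows "fwd ([1] @ replicate (L - 2) m @ [1]) (parity_net_W L) (parity_net_b L m t) (L - 2)
           (\<lambda>i. if i = 0 then x else 0)
         = (\<lambda>j. if j < m then sgn_act (x - t j) else 0)"
proof -
  let ?ws = "[1] @ replicate (L - 2) m @ [1]"
  have "fwd ?ws (parity_net_W L) (parity_net_b L m t) (L - 2) (\<lambda>i. if i = 0 then x else 0)
      = fwd ?ws (parity_net_W L) (parity_net_b L m t) 1 (\<lambda>i. if i = 0 then x else 0)"
    using assms nth_hidden_widths(3)[OF assms]
    by (intro fwd_identity_layers[where q = m]) (auto simp: parity_net_W_def parity_net_b_def fun_eq_iff)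
  also have "\<dots> = (\<lambda>j. if j < m then sgn_act (x - t j) else 0)"
    using assms nth_hidden_widths(2)[OF assms, of m] nth_hidden_widths(3)[OF assms, of 1 m]
    by (auto simp: layer_def parity_net_W_def parity_net_b_def fun_eq_iff)
  finally show ?thesis .
qed

lemma unit_out_parity_net:
  assumes "L \<ge> 3"
  shows "unit_out ([1] @ replicate (L - 2) m @ [1]) (parity_net_W L) (parity_net_b L m t) x
         = sgn_act (1 - 2 * (\<Sum>j | j < m \<and> x < t j. (-1) ^ j))"
proof -
  let ?u = "\<lambda>j. if j < m then sgn_act (x - t j) else 0"
  let ?ws = "[1] @ replicate (L - 2) m @ [1]"
  have last: "L - 1 = Suc (L - 2)"
    using assms by simp
  then have "unit_out ?ws (parity_net_W L) (parity_net_b L m t) x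
      = fwd ?ws (parity_net_W L) (parity_net_b L m t) (Suc (L - 2)) (\<lambda>i. if i = 0 then x else 0) 0"
    by (simp only: unit_out_def nth_hidden_widths(1)[OF assms])
  also have "\<dots> = layer m 1 (parity_net_W L (L - 2)) (parity_net_b L m t (L - 2)) ?u 0"
    using assms last fwd_parity_net_hidden[OF assms]
      nth_hidden_widths(3)[OF assms, of "L - 2" m] nth_hidden_widths(4)[OF assms, of m]
    by simp
  also have "\<dots> = sgn_act ((\<Sum>j<m. sgn_act (x - t j) * (-1) ^ j) + (1 - (\<Sum>j<m. (-1) ^ j)))"
    using assms by (simp add: layer_def parity_net_W_def parity_net_b_def)
  also have "(\<Sum>j<m. sgn_act (x - t j) * (-1) ^ j)
      = (\<Sum>j<m. (-1) ^ j) - 2 * (\<Sum>j | j < m \<and> x < t j. (-1::real) ^ j)"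
  proof -
    have "(\<Sum>j<m. sgn_act (x - t j) * (-1) ^ j)
        = (\<Sum>j<m. (-1) ^ j - 2 * (if x < t j then (-1::real) ^ j else 0))"
      by (intro sum.cong) (auto simp: sgn_act_def)
    also have "\<dots> = (\<Sum>j<m. (-1) ^ j) - 2 * (\<Sum>j<m. if x < t j then (-1::real) ^ j else 0)"
      by (simp add: sum_subtractf sum_distrib_left)
    also have "(\<Sum>j<m. if x < t j then (-1::real) ^ j else 0) = (\<Sum>j | j < m \<and> x < t j. (-1) ^ j)"
      by (simp add: sum.inter_filter[symmetric])
    finally show ?thesis
      by simp
  qed
  finally show ?thesis by simp
qed

lemma unit_out_parity_net_prefix:
  assumes "L \<ge> 3" and "{j. j < m \<and> x < t j} = {..<c}"
  shows "unit_out ([1] @ replicate (L - 2) m @ [1]) (parity_net_W L) (parity_net_b L m t) x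
         = (-1) ^ c"
  using unit_out_parity_net[OF assms(1)] assms(2)
  by (simp add: one_minus_two_alternating_sum sgn_act_pm1[OF neg_one_power_in_pm1])

lemma down_closed_threshold:
  fixes xs :: "real list"
  assumes sorted: "sorted_wrt (>) xs"
    and down_closed: "\<And>i k. i \<le> k \<Longrightarrow> k < length xs \<Longrightarrow> P k \<Longrightarrow> P i"
  shows "\<exists>\<tau>. \<forall>i < length xs. \<tau> \<le> xs ! i \<longleftrightarrow> P i"
proof (cases "\<exists>i < length xs. P i")
  case True
  define p where "p = Max {i. i < length xs \<and> P i}"
  have p: "p < length xs" "P p" and le_p: "\<And>i. i < length xs \<Longrightarrow> P i \<Longrightarrow> i \<le> p"
    using True Max_in[of "{i. i < length xs \<and> P i}"] unfolding p_def by auto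
  have "xs ! p \<le> xs ! i \<longleftrightarrow> P i" if "i < length xs" for i
  proof
    assume "P i"
    then have "i \<le> p"
      using le_p[OF that] by blast
    then show "xs ! p \<le> xs ! i"
      using sorted_wrt_nth_less[OF sorted _ p(1), of i] by (cases "i = p") auto
  next
    assume "xs ! p \<le> xs ! i"
    then have "\<not> p < i"
      using sorted_wrt_nth_less[OF sorted _ that] by force
    then show "P i"
      using down_closed[OF _ p] by simp
  qed
  then show ?thesis by blast
next
  case False
  have "xs ! i < xs ! 0 + 1" if "i < length xs" for i
    using that sorted_wrt_nth_less[OF sorted, of 0 i] by (cases i) auto
  then show ?thesis
    using False by (metis not_le)
qed

lemma monotone_count_thresholds:
  fixes xs :: "real list" and c :: "nat \<Rightarrow> nat"
  assumes "sorted_wrt (>) xs" and "mono c"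
  obtains t where "\<And>i j. i < length xs \<Longrightarrow> xs ! i < t j \<longleftrightarrow> j < c i"
proof -
  have "\<forall>j. \<exists>\<tau>. \<forall>i < length xs. \<tau> \<le> xs ! i \<longleftrightarrow> c i \<le> j"
  proof
    fix j
    show "\<exists>\<tau>. \<forall>i < length xs. \<tau> \<le> xs ! i \<longleftrightarrow> c i \<le> j"
    proof (rule down_closed_threshold[OF assms(1)])
      show "c i \<le> j" if "i \<le> k" and "c k \<le> j" for i k
        using monoD[OF assms(2) that(1)] that(2) by (rule le_trans)
    qed
  qed
  from choice[OF this] obtain t
    where t: "\<forall>j. \<forall>i < length xs. t j \<le> xs ! i \<longleftrightarrow> c i \<le> j"
    by blast
  show thesis
  proof (rule that)
    show "xs ! i < t j \<longleftrightarrow> j < c i" if "i < length xs" for i j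
      using t that by (simp add: not_le[symmetric])
  qed
qed

definition switch_count :: "real list \<Rightarrow> nat \<Rightarrow> nat" where
  "switch_count h i = card {n \<in> switches h. n \<le> i}"

lemma finite_switches: "finite (switches h)"
  unfolding switches_def by auto

lemma mono_switch_count: "mono (switch_count h)"
  unfolding switch_count_def mono_def using finite_switches by (intro allI impI card_mono) auto

lemma switch_count_le_card_switches: "switch_count h i \<le> card (switches h)"
  unfolding switch_count_def using finite_switches by (intro card_mono) auto

lemma switch_count_0: "switch_count h 0 = 0"
  unfolding switch_count_def switches_def by auto

lemma switch_count_Suc:
  "switch_count h (Suc i) = switch_count h i + (if Suc i \<in> switches h then 1 else 0)"
proof -
  have "{n \<in> switches h. n \<le> Suc i} =
      (if Suc i \<in> switches h then insert (Suc i) {n \<in> switches h. n \<le> i}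
       else {n \<in> switches h. n \<le> i})"
    using le_Suc_eq by auto
  then show ?thesis
    unfolding switch_count_def using finite_switches by simp
qed

lemma nth_eq_neg_one_power_switch_count:
  assumes "set h \<subseteq> {-1, 1}" and "h ! 0 = 1" and "i < length h"
  shows "h ! i = (-1) ^ switch_count h i"
  using assms(3)
proof (induction i)
  case 0
  then show ?case
    using assms(2) by (simp add: switch_count_0)
next
  case (Suc i)
  have "h ! Suc i \<in> set h" and "h ! i \<in> set h"
    using Suc.prems by auto
  then have "h ! Suc i \<in> {-1, 1}" and "h ! i \<in> {-1, 1}"
    using assms(1) by blast+
  then have "h ! Suc i = (if Suc i \<in> switches h then - h ! i else h ! i)"
    using Suc.prems unfolding switches_def by auto
  then show ?case
    using Suc by (simp add: switch_count_Suc)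
qed

theorem proposition10:
  fixes L m :: nat and xs :: "real list"
  assumes "L \<ge> 3" and "m \<ge> 1"
    and "xs \<noteq> []" and "sorted_wrt (>) xs"
  shows "H_switch m (length xs) \<subseteq> A_par ([1] @ replicate (L - 2) m @ [1]) xs"
proof
  fix h
  assume "h \<in> H_switch m (length xs)"
  then have len: "length h = length xs" and pm1: "set h \<subseteq> {-1, 1}" and h0: "h ! 0 = 1"
    and few: "card (switches h) \<le> m"
    unfolding H_switch_def by auto
  obtain t where t: "\<And>i j. i < length xs \<Longrightarrow> xs ! i < t j \<longleftrightarrow> j < switch_count h i"
    using monotone_count_thresholds[OF assms(4) mono_switch_count] by blast
  let ?out = "unit_out ([1] @ replicate (L - 2) m @ [1]) (parity_net_W L) (parity_net_b L m t)"
  have "?out (xs ! i) = h ! i" if "i < length xs" for i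
  proof -
    have "switch_count h i \<le> m"
      using switch_count_le_card_switches few by (rule le_trans)
    then have "{j. j < m \<and> xs ! i < t j} = {..<switch_count h i}"
      by (auto simp: t[OF that])
    then show ?thesis
      using unit_out_parity_net_prefix[OF assms(1)] nth_eq_neg_one_power_switch_count[OF pm1 h0]
        len that by simp
  qed
  then have "map ?out xs = h"
    using len by (intro nth_equalityI) auto
  moreover have "hd h = 1"
    using h0 len assms(3) by (metis hd_conv_nth length_0_conv)
  ultimately show "h \<in> A_par ([1] @ replicate (L - 2) m @ [1]) xs"
    by (rule A_parI)
qed

end
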